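(* Let $f$, $G$, $\mathcal{D}$, $L$, $\sigma^2$, $\varepsilon$, $\Delta=f(x^0)-f^*$ be as in the hypotheses: $f:\mathbb{R}^d\to\mathbb{R}$ differentiable, $L$-smooth, bounded below by $f^*$, and $\mathbb{E}_{\xi\sim\mathcal{D}}[G(x;\xi)]=\nabla f(x)$, $\mathbb{E}_{\xi\sim\mathcal{D}}\|G(x;\xi)-\nabla f(x)\|^2\le\sigma^2$ for all $x$. Run Rennala SGD in the fixed computation model with $n$ workers and times $0<\tau_1\le\dots\le\tau_n$, batch size $S=\max\{\lceil\sigma^2/\varepsilon\rceil,1\}$ and stepsize $\gamma=\min\{1/L,\varepsilon S/(2L\sigma^2)\}$ ($\gamma=1/L$ if $\sigma^2=0$), and assume $K:=24L\Delta/\varepsilon$ is an integer. Then the server has computed $x^0,\dots,x^K$ by time $$96\cdot\min_{m\in[n]}\left[\Big(\frac1m\sum_{i=1}^m\frac1{\tau_i}\Big)^{-1}\Big(\frac{L\Delta}{\varepsilon}+\frac{\sigma^2L\Delta}{m\varepsilon^2}\Big)\right],$$ and $\frac1K\sum_{k=0}^{K-1}\mathbb{E}\|\nabla f(x^k)\|^2\le\varepsilon$.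
   Context: Rennala SGD in the fixed computation model: there are a server and $n$ workers; worker $i$ needs exactly $\tau_i$ seconds to compute one stochastic gradient $G(x;\xi)$ with a fresh independent $\xi\sim\mathcal{D}$; communication is instantaneous. At time $0$ every worker receives $(x^0,0)$ and starts computing. Each worker repeatedly: when it has received a pair $(x^k,k)$ it computes $G(x^k;\xi)$ (taking $\tau_i$ seconds), sends $(G(x^k;\xi),k)$ to the server, immediately receives back a pair, and starts computing at the received point. The server runs iterations $k=0,1,\dots,K-1$: it sets $g^k=0$ and an acceptance counter to $0$; whenever a pair $(g,k')$ arrives from a worker, if $k'=k$ it adds $g/S$ to $g^k$ and increments the counter, otherwise it discards $g$; in either case it then sends the current pair $(x^k,k)$ back to that worker; as soon as $S$ gradients have been accepted it sets $x^{k+1}=x^k-\gamma g^k$ and starts iteration $k+1$. *)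

theory Defs
  imports "HOL-Probability.Probability"
begin

text \<open>State of Rennala SGD in the fixed computation model (workers indexed 1..n).
  now: time of the last processed arrival; iter: current server iteration k;
  cnt: acceptance counter; acc: accumulator g^k; pt: current server point x^k;
  wlab i / wpt i: label and point worker i is currently computing at;
  wfin i: time at which worker i finishes its current computation.\<close>

record 'a rstate =
  now  :: real
  iter :: nat
  cnt  :: nat
  acc  :: 'a
  pt   :: 'a
  wlab :: "nat \<Rightarrow> nat"
  wpt  :: "nat \<Rightarrow> 'a"
  wfin :: "nat \<Rightarrow> real"

definition next_worker :: "nat \<Rightarrow> (nat \<Rightarrow> real) \<Rightarrow> nat" where
  "next_worker n fin =
     (LEAST i. 1 \<le> i \<and> i \<le> n \<and> (\<forall>j. 1 \<le> j \<and> j \<le> n \<longrightarrow> fin i \<le> fin j))"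

text \<open>Processing one arrival; xi is the fresh sample used by the computation
  that has just finished.\<close>
definition rennala_step ::
  "nat \<Rightarrow> (nat \<Rightarrow> real) \<Rightarrow> nat \<Rightarrow> real \<Rightarrow> ('a::real_vector \<Rightarrow> 'b \<Rightarrow> 'a) \<Rightarrow> 'b
    \<Rightarrow> 'a rstate \<Rightarrow> 'a rstate" where
  "rennala_step n \<tau> S \<gamma> G xi s =
    (let i = next_worker n (wfin s);
         t = wfin s i;
         g = G (wpt s i) xi;
         accepted = (wlab s i = iter s);
         acc1 = (if accepted then acc s + (1 / real S) *\<^sub>R g else acc s);
         cnt1 = (if accepted then Suc (cnt s) else cnt s);
         full = (cnt1 = S)
     in s\<lparr> now := t,
           wlab := (wlab s)(i := iter s),
           wpt := (wpt s)(i := pt s),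
           wfin := (wfin s)(i := t + \<tau> i),
           iter := (if full then Suc (iter s) else iter s),
           cnt := (if full then 0 else cnt1),
           acc := (if full then 0 else acc1),
           pt := (if full then pt s - \<gamma> *\<^sub>R acc1 else pt s) \<rparr>)"

definition rennala_init :: "(nat \<Rightarrow> real) \<Rightarrow> 'a::real_vector \<Rightarrow> 'a rstate" where
  "rennala_init \<tau> x0 =
     \<lparr> now = 0, iter = 0, cnt = 0, acc = 0, pt = x0,
       wlab = (\<lambda>_. 0), wpt = (\<lambda>_. x0), wfin = \<tau> \<rparr>"

text \<open>State after processing m arrivals; the m-th processed computation uses sample omega m.\<close>
primrec rennala_run ::
  "nat \<Rightarrow> (nat \<Rightarrow> real) \<Rightarrow> nat \<Rightarrow> real \<Rightarrow> ('a::real_vector \<Rightarrow> 'b \<Rightarrow> 'a) \<Rightarrow> 'a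
    \<Rightarrow> (nat \<Rightarrow> 'b) \<Rightarrow> nat \<Rightarrow> 'a rstate" where
  "rennala_run n \<tau> S \<gamma> G x0 \<omega> 0 = rennala_init \<tau> x0"
| "rennala_run n \<tau> S \<gamma> G x0 \<omega> (Suc m) =
     rennala_step n \<tau> S \<gamma> G (\<omega> m) (rennala_run n \<tau> S \<gamma> G x0 \<omega> m)"

definition rennala_iterate ::
  "nat \<Rightarrow> (nat \<Rightarrow> real) \<Rightarrow> nat \<Rightarrow> real \<Rightarrow> ('a::real_vector \<Rightarrow> 'b \<Rightarrow> 'a) \<Rightarrow> 'a
    \<Rightarrow> (nat \<Rightarrow> 'b) \<Rightarrow> nat \<Rightarrow> 'a" where
  "rennala_iterate n \<tau> S \<gamma> G x0 \<omega> k =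
     pt (rennala_run n \<tau> S \<gamma> G x0 \<omega> (LEAST m. iter (rennala_run n \<tau> S \<gamma> G x0 \<omega> m) = k))"

end

theory Submission
  imports Defs
begin

text \<open>Time: the schedule does not depend on the samples. Within an iteration a worker wastes at
  most the computation it started before the iteration began, and each of its later computations
  is accepted. Hence \<open>t\<close> seconds into an iteration the \<open>m\<close> fastest workers have delivered at least
  \<open>t \<Sum>\<^sub>i\<^sub>\<le>\<^sub>m 1/\<tau>\<^sub>i - 2m\<close> accepted gradients, so every iteration lasts at most
  \<open>(S - 1 + 2m) / \<Sum>\<^sub>i\<^sub>\<le>\<^sub>m 1/\<tau>\<^sub>i\<close>, and \<open>S - 1 \<le> \<sigma>\<^sup>2/\<epsilon>\<close> gives the bound.

  Convergence: as the schedule is fixed, \<open>x\<^sup>k\<close> is a function of the samples accepted before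
  iteration \<open>k\<close>, while iteration \<open>k\<close> accepts \<open>S\<close> fresh independent samples, all at \<open>x\<^sup>k\<close>.
  Conditioning on the past, the descent lemma gives
  \<open>E f(x\<^sup>k\<^sup>+\<^sup>1) + \<gamma>/2 E\<parallel>\<nabla>f(x\<^sup>k)\<parallel>\<^sup>2 \<le> E f(x\<^sup>k) + L\<gamma>\<^sup>2\<sigma>\<^sup>2/(2S)\<close>; telescoping and the choice of
  \<open>\<gamma>\<close>, \<open>S\<close> and \<open>K\<close> give the claim.\<close>

section \<open>Smoothness and mini-batch noise\<close>

lemma L_smooth_descent:
  fixes f :: "'a::real_inner \<Rightarrow> real"
  assumes grad: "\<And>x. (f has_derivative (\<lambda>h. gradf x \<bullet> h)) (at x)"
    and smooth: "\<And>x y. norm (gradf x - gradf y) \<le> L * norm (x - y)"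
  shows "f y \<le> f x + gradf x \<bullet> (y - x) + L / 2 * (norm (y - x))\<^sup>2"
proof -
  define d where "d = y - x"
  define \<phi> where "\<phi> t = f (x + t *\<^sub>R d) - t * (gradf x \<bullet> d) - L / 2 * t\<^sup>2 * (norm d)\<^sup>2" for t
  have deriv: "(\<phi> has_real_derivative
      (gradf (x + t *\<^sub>R d) \<bullet> d - gradf x \<bullet> d - L * t * (norm d)\<^sup>2)) (at t)" for t
  proof -
    have "((\<lambda>t. x + t *\<^sub>R d) has_derivative (\<lambda>h. h *\<^sub>R d)) (at t)"
      by (auto intro!: derivative_eq_intros)
    from has_derivative_compose[OF this grad] have
      "((\<lambda>t. f (x + t *\<^sub>R d)) has_derivative (\<lambda>h. gradf (x + t *\<^sub>R d) \<bullet> (h *\<^sub>R d))) (at t)" .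
    then have "((\<lambda>t. f (x + t *\<^sub>R d)) has_real_derivative (gradf (x + t *\<^sub>R d) \<bullet> d)) (at t)"
      by (rule has_derivative_imp_has_field_derivative) (simp add: mult.commute)
    then show ?thesis unfolding \<phi>_def
      by (auto intro!: derivative_eq_intros simp: algebra_simps)
  qed
  have nonpos: "gradf (x + t *\<^sub>R d) \<bullet> d - gradf x \<bullet> d - L * t * (norm d)\<^sup>2 \<le> 0" if "0 \<le> t" for t
  proof -
    have "gradf (x + t *\<^sub>R d) \<bullet> d - gradf x \<bullet> d = (gradf (x + t *\<^sub>R d) - gradf x) \<bullet> d"
      by (simp add: inner_diff_left)
    also have "\<dots> \<le> norm (gradf (x + t *\<^sub>R d) - gradf x) * norm d" by (rule norm_cauchy_schwarz)
    also have "\<dots> \<le> L * norm (t *\<^sub>R d) * norm d"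
      using smooth[of "x + t *\<^sub>R d" x] by (simp add: mult_right_mono)
    also have "\<dots> = L * t * (norm d)\<^sup>2" using that by (simp add: power2_eq_square)
    finally show ?thesis by simp
  qed
  have "\<phi> 1 \<le> \<phi> 0"
  proof (rule DERIV_nonpos_imp_nonincreasing[of 0 1])
    fix t :: real assume "0 \<le> t" "t \<le> 1"
    then show "\<exists>y. (\<phi> has_real_derivative y) (at t) \<and> y \<le> 0" using deriv nonpos by blast
  qed simp
  then show ?thesis by (simp add: \<phi>_def d_def)
qed

lemma descent_minibatch_step:
  fixes f :: "'a::real_inner \<Rightarrow> real" and c :: real
  assumes grad: "\<And>x. (f has_derivative (\<lambda>h. gradf x \<bullet> h)) (at x)"
    and smooth: "\<And>x y. norm (gradf x - gradf y) \<le> L * norm (x - y)"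
  shows "f (x - \<gamma> *\<^sub>R (gradf x + c *\<^sub>R e)) \<le> f x - \<gamma> * (norm (gradf x))\<^sup>2
           + L * \<gamma>\<^sup>2 / 2 * (norm (gradf x))\<^sup>2 + (L * \<gamma>\<^sup>2 - \<gamma>) * c * (gradf x \<bullet> e)
           + L * \<gamma>\<^sup>2 / 2 * c\<^sup>2 * (norm e)\<^sup>2"
proof -
  define d where "d = gradf x"
  define g where "g = d + c *\<^sub>R e"
  have "f (x - \<gamma> *\<^sub>R g) \<le> f x + d \<bullet> (x - \<gamma> *\<^sub>R g - x) + L / 2 * (norm (x - \<gamma> *\<^sub>R g - x))\<^sup>2"
    unfolding d_def by (rule L_smooth_descent[OF grad smooth])
  also have "\<dots> = f x - \<gamma> * (d \<bullet> g) + L / 2 * \<gamma>\<^sup>2 * (norm g)\<^sup>2"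
    by (simp add: power_mult_distrib)
  also have "d \<bullet> g = (norm d)\<^sup>2 + c * (d \<bullet> e)"
    by (simp add: g_def inner_add_right power2_norm_eq_inner)
  also have "(norm g)\<^sup>2 = (norm d)\<^sup>2 + 2 * c * (d \<bullet> e) + c\<^sup>2 * (norm e)\<^sup>2"
    unfolding g_def power2_norm_eq_inner
    by (simp add: inner_add_left inner_add_right inner_commute power2_eq_square algebra_simps)
  finally show ?thesis
    unfolding g_def d_def by (simp add: algebra_simps power2_eq_square)
qed

lemma power2_norm_add_le:
  fixes a b :: "'a::real_normed_vector"
  shows "(norm (a + b))\<^sup>2 \<le> 2 * (norm a)\<^sup>2 + 2 * (norm b)\<^sup>2"
proof -
  have "(norm (a + b))\<^sup>2 \<le> (norm a + norm b)\<^sup>2" by (simp add: power_mono norm_triangle_ineq)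
  also have "\<dots> \<le> 2 * (norm a)\<^sup>2 + 2 * (norm b)\<^sup>2"
    using sum_squares_ge_zero[of "norm a - norm b" 0] by (simp add: power2_eq_square algebra_simps)
  finally show ?thesis .
qed

lemma product_prob_space_iid: "prob_space D \<Longrightarrow> product_prob_space (\<lambda>_. D)"
  by (simp add: product_prob_space_def product_prob_space_axioms_def product_sigma_finite_def
      prob_space_imp_sigma_finite)

lemma prob_space_PiM_iid: "prob_space D \<Longrightarrow> prob_space (PiM I (\<lambda>_. D))"
  by (rule prob_space_PiM) auto

lemma integral_power2_norm_add_centered:
  fixes e :: "'b \<Rightarrow> 'a::{real_inner,second_countable_topology}"
  assumes D: "prob_space D" and ie: "integrable D e" and e0: "integral\<^sup>L D e = 0"
    and ie2: "integrable D (\<lambda>\<xi>. (norm (e \<xi>))\<^sup>2)"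
  shows "(\<integral>\<xi>. (norm (a + e \<xi>))\<^sup>2 \<partial>D) = (norm a)\<^sup>2 + (\<integral>\<xi>. (norm (e \<xi>))\<^sup>2 \<partial>D)"
proof -
  have expand: "(norm (a + e \<xi>))\<^sup>2 = ((norm a)\<^sup>2 + 2 * (a \<bullet> e \<xi>)) + (norm (e \<xi>))\<^sup>2" for \<xi>
    using dot_norm[of a "e \<xi>"] by simp
  have int_const: "integrable D (\<lambda>_. (norm a)\<^sup>2)"
    using prob_space.finite_measure[OF D] by (rule finite_measure.integrable_const)
  have int_lin: "integrable D (\<lambda>\<xi>. (norm a)\<^sup>2 + 2 * (a \<bullet> e \<xi>))"
    using int_const ie by auto
  have "(\<integral>\<xi>. (norm a)\<^sup>2 + 2 * (a \<bullet> e \<xi>) \<partial>D) = (norm a)\<^sup>2 + 2 * (a \<bullet> integral\<^sup>L D e)"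
    using int_const ie prob_space.prob_space[OF D] by (subst Bochner_Integration.integral_add) auto
  then show ?thesis
    unfolding expand using int_lin ie2 e0 by (subst Bochner_Integration.integral_add) auto
qed

lemma integrable_power2_norm_add_fresh_coordinate:
  fixes e :: "'b \<Rightarrow> 'a::{real_normed_vector,second_countable_topology}"
    and s :: "(nat \<Rightarrow> 'b) \<Rightarrow> 'a"
  assumes D: "prob_space D" and ie: "integrable D e" and ie2: "integrable D (\<lambda>\<xi>. (norm (e \<xi>))\<^sup>2)"
    and A: "finite A" "i \<notin> A"
    and sm[measurable]: "s \<in> borel_measurable (PiM A (\<lambda>_. D))" and s_restrict: "\<And>z. s (restrict z A) = s z"
    and is2: "integrable (PiM A (\<lambda>_. D)) (\<lambda>z. (norm (s z))\<^sup>2)"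
  shows "integrable (PiM (insert i A) (\<lambda>_. D)) (\<lambda>z. (norm (s z + e (z i)))\<^sup>2)"
proof -
  interpret P: product_prob_space "\<lambda>_. D" "insert i A" by (rule product_prob_space_iid[OF D])
  let ?PA = "PiM A (\<lambda>_. D)" and ?PiA = "PiM (insert i A) (\<lambda>_. D)"
  have em[measurable]: "e \<in> borel_measurable D" using ie by auto
  have restr: "(\<lambda>z. restrict z A) \<in> measurable ?PiA ?PA"
    by (rule measurable_restrict_subset) auto
  have smi[measurable]: "s \<in> borel_measurable ?PiA"
    using measurable_compose[OF restr sm] s_restrict by simp
  have eim[measurable]: "(\<lambda>z. e (z i)) \<in> borel_measurable ?PiA"
    using measurable_compose[OF measurable_component_singleton[of i "insert i A" "\<lambda>_. D"] em] by simp
  have int_s: "integrable ?PiA (\<lambda>z. (norm (s z))\<^sup>2)"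
  proof -
    have "?PA = distr ?PiA ?PA (\<lambda>z. restrict z A)"
      by (rule P.distr_restrict) (use A in auto)
    with is2 have "integrable (distr ?PiA ?PA (\<lambda>z. restrict z A)) (\<lambda>z. (norm (s z))\<^sup>2)"
      by simp
    then have "integrable ?PiA (\<lambda>z. (norm (s (restrict z A)))\<^sup>2)"
      by (subst (asm) integrable_distr_eq) (auto intro: restr)
    then show ?thesis by (simp add: s_restrict)
  qed
  have int_e: "integrable ?PiA (\<lambda>z. (norm (e (z i)))\<^sup>2)"
  proof -
    have "integrable (distr ?PiA D (\<lambda>\<omega>. \<omega> i)) (\<lambda>\<xi>. (norm (e \<xi>))\<^sup>2)"
      using P.PiM_component[of i] ie2 by simp
    then show ?thesis by (subst (asm) integrable_distr_eq) auto
  qed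
  show ?thesis
  proof (rule Bochner_Integration.integrable_bound)
    show "integrable ?PiA (\<lambda>z. 2 * (norm (s z))\<^sup>2 + 2 * (norm (e (z i)))\<^sup>2)"
      using int_s int_e by auto
    show "AE z in ?PiA. norm ((norm (s z + e (z i)))\<^sup>2)
                        \<le> norm (2 * (norm (s z))\<^sup>2 + 2 * (norm (e (z i)))\<^sup>2)"
      using power2_norm_add_le by auto
  qed measurable
qed

lemma integral_power2_norm_add_fresh_coordinate:
  fixes e :: "'b \<Rightarrow> 'a::{real_inner,second_countable_topology}" and s :: "(nat \<Rightarrow> 'b) \<Rightarrow> 'a"
  assumes D: "prob_space D" and ie: "integrable D e" and e0: "integral\<^sup>L D e = 0"
    and ie2: "integrable D (\<lambda>\<xi>. (norm (e \<xi>))\<^sup>2)"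
    and A: "finite A" "i \<notin> A"
    and sm: "s \<in> borel_measurable (PiM A (\<lambda>_. D))" and s_restrict: "\<And>z. s (restrict z A) = s z"
    and is2: "integrable (PiM A (\<lambda>_. D)) (\<lambda>z. (norm (s z))\<^sup>2)"
  shows "(\<integral>z. (norm (s z + e (z i)))\<^sup>2 \<partial>PiM (insert i A) (\<lambda>_. D))
         = (\<integral>z. (norm (s z))\<^sup>2 \<partial>PiM A (\<lambda>_. D)) + (\<integral>\<xi>. (norm (e \<xi>))\<^sup>2 \<partial>D)"
proof -
  interpret P: product_prob_space "\<lambda>_. D" "insert i A" by (rule product_prob_space_iid[OF D])
  let ?PA = "PiM A (\<lambda>_. D)" and ?PiA = "PiM (insert i A) (\<lambda>_. D)"
  have s_upd: "s (u(i := y)) = s u" for u y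
  proof -
    have "restrict (u(i := y)) A = restrict u A" using A(2) by (auto simp: restrict_def)
    then show ?thesis by (metis s_restrict)
  qed
  have "(\<integral>z. (norm (s z + e (z i)))\<^sup>2 \<partial>?PiA)
      = (\<integral>u. (\<integral>y. (norm (s (u(i := y)) + e ((u(i := y)) i)))\<^sup>2 \<partial>D) \<partial>?PA)"
    using integrable_power2_norm_add_fresh_coordinate[OF D ie ie2 A sm s_restrict is2] A
    by (intro P.product_integral_insert) auto
  also have "\<dots> = (\<integral>u. (norm (s u))\<^sup>2 + (\<integral>\<xi>. (norm (e \<xi>))\<^sup>2 \<partial>D) \<partial>?PA)"
    by (simp add: s_upd integral_power2_norm_add_centered[OF D ie e0 ie2])
  also have "\<dots> = (\<integral>z. (norm (s z))\<^sup>2 \<partial>?PA) + (\<integral>\<xi>. (norm (e \<xi>))\<^sup>2 \<partial>D)"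
    using is2 prob_space.prob_space[OF prob_space_PiM_iid[OF D]]
      finite_measure.integrable_const[OF prob_space.finite_measure[OF prob_space_PiM_iid[OF D]]]
    by (subst Bochner_Integration.integral_add) auto
  finally show ?thesis .
qed

lemma integral_power2_norm_sum_iid:
  fixes e :: "'b \<Rightarrow> 'a::{real_inner,second_countable_topology}" and A :: "nat set"
  assumes D: "prob_space D" and ie: "integrable D e" and e0: "integral\<^sup>L D e = 0"
    and ie2: "integrable D (\<lambda>\<xi>. (norm (e \<xi>))\<^sup>2)" and A: "finite A"
  shows "integrable (PiM A (\<lambda>_. D)) (\<lambda>z. (norm (\<Sum>j\<in>A. e (z j)))\<^sup>2) \<and>
         (\<integral>z. (norm (\<Sum>j\<in>A. e (z j)))\<^sup>2 \<partial>PiM A (\<lambda>_. D))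
           = real (card A) * (\<integral>\<xi>. (norm (e \<xi>))\<^sup>2 \<partial>D)"
  using A
proof (induction A rule: finite_induct)
  case (insert i A)
  have em[measurable]: "e \<in> borel_measurable D" using ie by auto
  have "(\<lambda>z. e (z j)) \<in> borel_measurable (PiM A (\<lambda>_. D))" if "j \<in> A" for j
    using measurable_compose[OF measurable_component_singleton[OF that, of "\<lambda>_. D"] em] by simp
  then have sm: "(\<lambda>z. \<Sum>j\<in>A. e (z j)) \<in> borel_measurable (PiM A (\<lambda>_. D))" by auto
  have sum_insert: "(\<Sum>j\<in>insert i A. e (z j)) = (\<Sum>j\<in>A. e (z j)) + e (z i)" for z
    using insert by (simp add: add.commute)
  have restrict_sum: "(\<Sum>j\<in>A. e (restrict z A j)) = (\<Sum>j\<in>A. e (z j))" for z by simp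
  note fresh = integrable_power2_norm_add_fresh_coordinate[OF D ie ie2 insert(1,2) sm restrict_sum
      conjunct1[OF insert.IH]]
    integral_power2_norm_add_fresh_coordinate[OF D ie e0 ie2 insert(1,2) sm restrict_sum
      conjunct1[OF insert.IH]]
  show ?case
    unfolding sum_insert using fresh insert conjunct2[OF insert.IH]
    by (simp add: algebra_simps)
qed simp

lemma integral_sum_iid_centered:
  fixes e :: "'b \<Rightarrow> 'a::{banach,second_countable_topology}" and A :: "nat set"
  assumes D: "prob_space D" and ie: "integrable D e" and e0: "integral\<^sup>L D e = 0"
    and A: "finite A"
  shows "integrable (PiM A (\<lambda>_. D)) (\<lambda>z. \<Sum>j\<in>A. e (z j))"
    and "(\<integral>z. (\<Sum>j\<in>A. e (z j)) \<partial>PiM A (\<lambda>_. D)) = 0"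
proof -
  interpret P: product_prob_space "\<lambda>_. D" A by (rule product_prob_space_iid[OF D])
  have em: "e \<in> borel_measurable D" using ie by auto
  have coord: "integrable (PiM A (\<lambda>_. D)) (\<lambda>z. e (z j)) \<and>
               (\<integral>z. e (z j) \<partial>PiM A (\<lambda>_. D)) = 0" if j: "j \<in> A" for j
  proof -
    have distr: "distr (PiM A (\<lambda>_. D)) D (\<lambda>\<omega>. \<omega> j) = D" using P.PiM_component[OF j] by simp
    have mj: "(\<lambda>\<omega>. \<omega> j) \<in> measurable (PiM A (\<lambda>_. D)) D"
      using measurable_component_singleton[OF j, of "\<lambda>_. D"] by simp
    show ?thesis
      using ie e0 distr integrable_distr_eq[OF mj em] integral_distr[OF mj em] by simp
  qed
  then show "integrable (PiM A (\<lambda>_. D)) (\<lambda>z. \<Sum>j\<in>A. e (z j))" by auto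
  with coord show "(\<integral>z. (\<Sum>j\<in>A. e (z j)) \<partial>PiM A (\<lambda>_. D)) = 0"
    by (simp add: Bochner_Integration.integral_sum)
qed

lemma minibatch_noise_moments:
  fixes D :: "'b measure" and A :: "nat set" and g :: "'b \<Rightarrow> 'a::euclidean_space"
  assumes D: "prob_space D" and A: "finite A"
    and unbiased_int: "integrable D g" and unbiased: "integral\<^sup>L D g = d"
    and var_int: "integrable D (\<lambda>\<xi>. (norm (g \<xi> - d))\<^sup>2)"
    and var: "(\<integral>\<xi>. (norm (g \<xi> - d))\<^sup>2 \<partial>D) \<le> \<sigma>\<^sup>2"
  defines "E z \<equiv> \<Sum>j\<in>A. (g (z j) - d)"
  shows "integrable (PiM A (\<lambda>_. D)) E" and "integral\<^sup>L (PiM A (\<lambda>_. D)) E = 0"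
    and "integrable (PiM A (\<lambda>_. D)) (\<lambda>z. (norm (E z))\<^sup>2)"
    and "integral\<^sup>L (PiM A (\<lambda>_. D)) (\<lambda>z. (norm (E z))\<^sup>2) \<le> real (card A) * \<sigma>\<^sup>2"
proof -
  define e where "e \<xi> = g \<xi> - d" for \<xi>
  have ie: "integrable D e" unfolding e_def
    using unbiased_int finite_measure.integrable_const[OF prob_space.finite_measure[OF D], of d]
    by simp
  have e0: "integral\<^sup>L D e = 0" unfolding e_def
    using unbiased_int unbiased prob_space.finite_measure[OF D] prob_space.prob_space[OF D]
    by (simp add: Bochner_Integration.integral_diff finite_measure.integrable_const)
  have E: "E = (\<lambda>z. \<Sum>j\<in>A. e (z j))" unfolding E_def e_def ..
  show "integrable (PiM A (\<lambda>_. D)) E" "integral\<^sup>L (PiM A (\<lambda>_. D)) E = 0"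
    unfolding E using integral_sum_iid_centered[OF D ie e0 A] by auto
  show "integrable (PiM A (\<lambda>_. D)) (\<lambda>z. (norm (E z))\<^sup>2)"
    "integral\<^sup>L (PiM A (\<lambda>_. D)) (\<lambda>z. (norm (E z))\<^sup>2) \<le> real (card A) * \<sigma>\<^sup>2"
    using integral_power2_norm_sum_iid[OF D ie e0 _ A] var_int var
    unfolding E e_def by (auto intro: mult_left_mono)
qed

lemma nn_integral_add_le_of_integral_bound:
  fixes g Q :: "'a \<Rightarrow> real"
  assumes "integrable M Q" "\<And>z. g z \<le> Q z" "\<And>z. 0 \<le> Q z" "0 \<le> a"
    and "integral\<^sup>L M Q + a \<le> b"
  shows "(\<integral>\<^sup>+z. ennreal (g z) \<partial>M) + ennreal a \<le> ennreal b"
proof -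
  have "(\<integral>\<^sup>+z. ennreal (g z) \<partial>M) \<le> (\<integral>\<^sup>+z. ennreal (Q z) \<partial>M)"
    by (rule nn_integral_mono) (simp add: assms(2) ennreal_leI)
  also have "\<dots> = ennreal (integral\<^sup>L M Q)"
    by (rule nn_integral_eq_integral) (use assms(1,3) in auto)
  finally have "(\<integral>\<^sup>+z. ennreal (g z) \<partial>M) + ennreal a \<le> ennreal (integral\<^sup>L M Q) + ennreal a"
    by (rule add_right_mono)
  also have "\<dots> = ennreal (integral\<^sup>L M Q + a)"
    using assms(3,4) by (intro ennreal_plus[symmetric] integral_nonneg_AE) auto
  also have "\<dots> \<le> ennreal b" by (rule ennreal_leI[OF assms(5)])
  finally show ?thesis .
qed

lemma expected_sgd_step_descent:
  fixes f :: "'a::euclidean_space \<Rightarrow> real" and A :: "nat set" and D :: "'b measure"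
  assumes grad: "\<And>x. (f has_derivative (\<lambda>h. gradf x \<bullet> h)) (at x)"
    and smooth: "\<And>x y. norm (gradf x - gradf y) \<le> L * norm (x - y)"
    and lower: "\<And>x. fstar \<le> f x"
    and D: "prob_space D"
    and unbiased_int: "\<And>x. integrable D (\<lambda>\<xi>. G x \<xi>)"
    and unbiased: "\<And>x. (\<integral>\<xi>. G x \<xi> \<partial>D) = gradf x"
    and var_int: "\<And>x. integrable D (\<lambda>\<xi>. (norm (G x \<xi> - gradf x))\<^sup>2)"
    and var: "\<And>x. (\<integral>\<xi>. (norm (G x \<xi> - gradf x))\<^sup>2 \<partial>D) \<le> \<sigma>\<^sup>2"
    and A: "finite A" "card A = S" "S \<ge> 1"
    and gam: "0 < \<gamma>" "\<gamma> * L \<le> 1" and Lpos: "L > 0"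
  shows "(\<integral>\<^sup>+z. ennreal (f (x - \<gamma> *\<^sub>R (\<Sum>j\<in>A. (1 / real S) *\<^sub>R G x (z j))) - fstar) \<partial>PiM A (\<lambda>_. D))
          + ennreal (\<gamma> / 2 * (norm (gradf x))\<^sup>2)
         \<le> ennreal (f x - fstar) + ennreal (L * \<gamma>\<^sup>2 * \<sigma>\<^sup>2 / (2 * real S))"
proof -
  let ?P = "PiM A (\<lambda>_. D)"
  have P: "prob_space ?P" by (rule prob_space_PiM_iid[OF D])
  define d where "d = gradf x"
  define E where "E = (\<lambda>z. \<Sum>j\<in>A. (G x (z j) - d))"
  have noise: "integrable ?P E" "integral\<^sup>L ?P E = 0" "integrable ?P (\<lambda>z. (norm (E z))\<^sup>2)"
    "integral\<^sup>L ?P (\<lambda>z. (norm (E z))\<^sup>2) \<le> real S * \<sigma>\<^sup>2"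
    using minibatch_noise_moments[OF D A(1) unbiased_int[of x] unbiased[of x] var_int[of x] var[of x]] A(2)
    unfolding E_def d_def by auto
  have Spos: "real S > 0" using A(3) by simp
  have minibatch: "(\<Sum>j\<in>A. (1 / real S) *\<^sub>R G x (z j)) = d + (1 / real S) *\<^sub>R E z" for z
  proof -
    have "(\<Sum>j\<in>A. (1 / real S) *\<^sub>R G x (z j)) = (1 / real S) *\<^sub>R (\<Sum>j\<in>A. d + (G x (z j) - d))"
      by (simp add: scaleR_sum_right)
    also have "\<dots> = (1 / real S) *\<^sub>R (real S *\<^sub>R d + E z)"
      by (simp only: sum.distrib E_def sum_constant_scaleR A(2))
    finally show ?thesis using Spos by (simp add: scaleR_add_right)
  qed
  define c0 where "c0 = f x - fstar - \<gamma> * (norm d)\<^sup>2 + L * \<gamma>\<^sup>2 / 2 * (norm d)\<^sup>2"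
  define c1 where "c1 = (L * \<gamma>\<^sup>2 - \<gamma>) / real S"
  define c2 where "c2 = L * \<gamma>\<^sup>2 / (2 * (real S)\<^sup>2)"
  define Q where "Q z = c0 + c1 * (d \<bullet> E z) + c2 * (norm (E z))\<^sup>2" for z
  have pointwise: "f (x - \<gamma> *\<^sub>R (\<Sum>j\<in>A. (1 / real S) *\<^sub>R G x (z j))) - fstar \<le> Q z" for z
  proof -
    have "f x - \<gamma> * (norm d)\<^sup>2 + L * \<gamma>\<^sup>2 / 2 * (norm d)\<^sup>2
        + (L * \<gamma>\<^sup>2 - \<gamma>) * (1 / real S) * (d \<bullet> E z)
        + L * \<gamma>\<^sup>2 / 2 * (1 / real S)\<^sup>2 * (norm (E z))\<^sup>2 - fstar = Q z"
      unfolding Q_def c0_def c1_def c2_def by (simp add: field_simps power2_eq_square)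
    then show ?thesis
      using descent_minibatch_step[OF grad smooth, of x \<gamma> "1 / real S" "E z"]
      unfolding minibatch d_def by linarith
  qed
  have Q_nonneg: "0 \<le> Q z" for z
    using pointwise[of z] lower[of "x - \<gamma> *\<^sub>R (\<Sum>j\<in>A. (1 / real S) *\<^sub>R G x (z j))"] by linarith
  have iQ: "integrable ?P Q"
    unfolding Q_def using noise(1,3) finite_measure.integrable_const[OF prob_space.finite_measure[OF P], of c0]
    by auto
  have "integral\<^sup>L ?P Q = c0 + c2 * integral\<^sup>L ?P (\<lambda>z. (norm (E z))\<^sup>2)"
    unfolding Q_def using noise(1-3) prob_space.prob_space[OF P] prob_space.finite_measure[OF P]
    by (simp add: Bochner_Integration.integral_add finite_measure.integrable_const)
  also have "c2 * integral\<^sup>L ?P (\<lambda>z. (norm (E z))\<^sup>2) \<le> c2 * (real S * \<sigma>\<^sup>2)"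
    using noise(4) Lpos by (intro mult_left_mono) (auto simp: c2_def)
  also have "c0 \<le> f x - fstar - \<gamma> / 2 * (norm d)\<^sup>2"
  proof -
    have "L * \<gamma>\<^sup>2 = \<gamma> * (\<gamma> * L)" by (simp add: power2_eq_square algebra_simps)
    also have "\<dots> \<le> \<gamma>" using gam mult_left_mono[of "\<gamma> * L" 1 \<gamma>] by simp
    finally have "L * \<gamma>\<^sup>2 / 2 * (norm d)\<^sup>2 \<le> \<gamma> / 2 * (norm d)\<^sup>2" by (intro mult_right_mono) auto
    then show ?thesis unfolding c0_def by simp
  qed
  finally have "integral\<^sup>L ?P Q + \<gamma> / 2 * (norm d)\<^sup>2 \<le> f x - fstar + L * \<gamma>\<^sup>2 * \<sigma>\<^sup>2 / (2 * real S)"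
    using Spos by (simp add: c2_def field_simps power2_eq_square)
  then have "(\<integral>\<^sup>+z. ennreal (f (x - \<gamma> *\<^sub>R (\<Sum>j\<in>A. (1 / real S) *\<^sub>R G x (z j))) - fstar) \<partial>?P)
      + ennreal (\<gamma> / 2 * (norm (gradf x))\<^sup>2) \<le> ennreal (f x - fstar + L * \<gamma>\<^sup>2 * \<sigma>\<^sup>2 / (2 * real S))"
    unfolding d_def using gam by (intro nn_integral_add_le_of_integral_bound[OF iQ pointwise Q_nonneg]) auto
  also have "\<dots> = ennreal (f x - fstar) + ennreal (L * \<gamma>\<^sup>2 * \<sigma>\<^sup>2 / (2 * real S))"
    using lower[of x] Lpos Spos by (intro ennreal_plus) auto
  finally show ?thesis .
qed

lemma nn_integral_PiM_UNIV_restrict: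
  assumes D: "prob_space D" and B: "finite B"
    and hm: "h \<in> borel_measurable (PiM B (\<lambda>_. D))" and hr: "\<And>\<omega>. h (restrict \<omega> B) = h \<omega>"
  shows "(\<integral>\<^sup>+\<omega>. h \<omega> \<partial>PiM UNIV (\<lambda>_::nat. D)) = (\<integral>\<^sup>+z. h z \<partial>PiM B (\<lambda>_. D))"
proof -
  interpret P: product_prob_space "\<lambda>_. D" "UNIV :: nat set" by (rule product_prob_space_iid[OF D])
  have "distr (PiM UNIV (\<lambda>_. D)) (PiM B (\<lambda>_. D)) (\<lambda>x. restrict x B) = PiM B (\<lambda>_. D)"
    by (rule P.distr_PiM_restrict_finite) (use B in auto)
  then have "(\<integral>\<^sup>+z. h z \<partial>PiM B (\<lambda>_. D))
      = (\<integral>\<^sup>+z. h z \<partial>distr (PiM UNIV (\<lambda>_. D)) (PiM B (\<lambda>_. D)) (\<lambda>x. restrict x B))"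
    by simp
  also have "\<dots> = (\<integral>\<^sup>+\<omega>. h (restrict \<omega> B) \<partial>PiM UNIV (\<lambda>_. D))"
    by (rule nn_integral_distr) (use hm in \<open>auto intro: measurable_restrict_subset\<close>)
  finally show ?thesis by (simp add: hr)
qed

lemma ennreal_average_le:
  fixes X :: ennreal and c B \<epsilon> :: real and K :: nat
  assumes X: "ennreal c * X \<le> ennreal B" and c: "c > 0" and B: "B \<ge> 0"
    and rate: "K > 0 \<Longrightarrow> B / (c * real K) \<le> \<epsilon>"
  shows "ennreal (1 / real K) * X \<le> ennreal \<epsilon>"
proof (cases "K = 0")
  case False
  have "ennreal (1 / real K) * X = ennreal (1 / real K) * ennreal (1 / c) * (ennreal c * X)"
    using c by (simp add: mult.assoc[symmetric] ennreal_mult[symmetric])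
  also have "\<dots> \<le> ennreal (1 / real K) * ennreal (1 / c) * ennreal B"
    by (rule mult_left_mono[OF X]) simp
  also have "\<dots> = ennreal (B / (c * real K))"
    using c B by (simp add: ennreal_mult[symmetric] field_simps)
  also have "\<dots> \<le> ennreal \<epsilon>" using rate False by (simp add: ennreal_leI)
  finally show ?thesis .
qed simp

section \<open>Parameter choices\<close>

lemma batch_size_bounds:
  fixes \<sigma> \<epsilon> :: real
  assumes eps: "\<epsilon> > 0" and S_def: "S = nat (max \<lceil>\<sigma>\<^sup>2 / \<epsilon>\<rceil> 1)"
  shows "S \<ge> 1" and "\<sigma>\<^sup>2 / \<epsilon> \<le> real S" and "real S - 1 \<le> \<sigma>\<^sup>2 / \<epsilon>"
proof -
  have S: "real S = max (real_of_int \<lceil>\<sigma>\<^sup>2 / \<epsilon>\<rceil>) 1" unfolding S_def by simp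
  have "\<sigma>\<^sup>2 / \<epsilon> \<ge> 0" using eps by simp
  moreover have "\<sigma>\<^sup>2 / \<epsilon> \<le> real_of_int \<lceil>\<sigma>\<^sup>2 / \<epsilon>\<rceil>" by (rule le_of_int_ceiling)
  moreover have "real_of_int \<lceil>\<sigma>\<^sup>2 / \<epsilon>\<rceil> < \<sigma>\<^sup>2 / \<epsilon> + 1" by linarith
  ultimately show "\<sigma>\<^sup>2 / \<epsilon> \<le> real S" "real S - 1 \<le> \<sigma>\<^sup>2 / \<epsilon>"
    unfolding S max_def by auto
  show "S \<ge> 1" unfolding S_def by simp
qed

lemma stepsize_bounds:
  fixes L \<sigma> \<epsilon> \<gamma> :: real
  assumes Lpos: "L > 0" and eps: "\<epsilon> > 0" and S: "\<sigma>\<^sup>2 / \<epsilon> \<le> real S"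
    and gamma_def: "\<gamma> = (if \<sigma>\<^sup>2 = 0 then 1 / L else min (1 / L) (\<epsilon> * real S / (2 * L * \<sigma>\<^sup>2)))"
  shows "0 < \<gamma>" and "\<gamma> * L \<le> 1" and "1 / 2 \<le> \<gamma> * L" and "\<gamma> * L * \<sigma>\<^sup>2 \<le> \<epsilon> * real S / 2"
proof -
  have "0 < \<gamma> \<and> \<gamma> * L \<le> 1 \<and> 1 / 2 \<le> \<gamma> * L \<and> \<gamma> * L * \<sigma>\<^sup>2 \<le> \<epsilon> * real S / 2"
  proof (cases "\<sigma>\<^sup>2 = 0")
    case True
    then show ?thesis using gamma_def Lpos eps by simp
  next
    case False
    then have s2: "\<sigma>\<^sup>2 > 0" by simp
    define t where "t = \<epsilon> * real S / (2 * L * \<sigma>\<^sup>2)"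
    have "0 < \<sigma>\<^sup>2 / \<epsilon>" using s2 eps by simp
    then have "real S > 0" using S by linarith
    have "\<sigma>\<^sup>2 \<le> \<epsilon> * real S" using S eps by (simp add: divide_simps mult.commute)
    then have tL: "1 / 2 \<le> t * L" and "0 < t" and tL\<sigma>: "t * L * \<sigma>\<^sup>2 = \<epsilon> * real S / 2"
      unfolding t_def using Lpos s2 eps \<open>real S > 0\<close> by (auto simp: field_simps)
    have \<gamma>: "\<gamma> = min (1 / L) t" using gamma_def False t_def by simp
    then have "\<gamma> \<le> t" "\<gamma> \<le> 1 / L" "0 < \<gamma>" using \<open>0 < t\<close> Lpos by auto
    then have "\<gamma> * L \<le> 1" and "\<gamma> * L * \<sigma>\<^sup>2 \<le> t * L * \<sigma>\<^sup>2"
      using Lpos by (auto simp: field_simps intro!: mult_right_mono)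
    moreover have "1 / 2 \<le> \<gamma> * L" using \<gamma> tL Lpos by (cases "1 / L \<le> t") auto
    ultimately show ?thesis using \<open>0 < \<gamma>\<close> tL\<sigma> by simp
  qed
  then show "0 < \<gamma>" "\<gamma> * L \<le> 1" "1 / 2 \<le> \<gamma> * L" "\<gamma> * L * \<sigma>\<^sup>2 \<le> \<epsilon> * real S / 2" by auto
qed

lemma iteration_budget_le:
  fixes L \<Delta> \<epsilon> \<sigma> H :: real and K S m :: nat
  assumes K: "real K = 24 * L * \<Delta> / \<epsilon>" and S: "real S - 1 \<le> \<sigma>\<^sup>2 / \<epsilon>"
    and Lpos: "L > 0" and \<Delta>: "\<Delta> \<ge> 0" and eps: "\<epsilon> > 0" and H: "H > 0" and m: "m \<ge> 1"
  shows "real K * ((real S - 1 + 2 * real m) / H)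
    \<le> 96 * (inverse ((1 / real m) * H) * (L * \<Delta> / \<epsilon> + \<sigma>\<^sup>2 * L * \<Delta> / (real m * \<epsilon>\<^sup>2)))"
proof -
  define P where "P = L * \<Delta> / \<epsilon>"
  define q where "q = \<sigma>\<^sup>2 / \<epsilon>"
  have P: "P \<ge> 0" and q: "q \<ge> 0" unfolding P_def q_def using Lpos \<Delta> eps by auto
  have "24 * P * (real S - 1 + 2 * real m) \<le> 24 * P * (q + 2 * real m)"
    using S P unfolding q_def by (intro mult_left_mono) auto
  also have "\<dots> \<le> 96 * P * (real m + q)" using P q m by (simp add: algebra_simps mult_left_mono)
  finally have "24 * P * (real S - 1 + 2 * real m) / H \<le> 96 * P * (real m + q) / H"
    using H by (simp add: divide_right_mono)
  moreover have "real K * ((real S - 1 + 2 * real m) / H) = 24 * P * (real S - 1 + 2 * real m) / H"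
    unfolding K P_def by simp
  moreover have "inverse ((1 / real m) * H) * (L * \<Delta> / \<epsilon> + \<sigma>\<^sup>2 * L * \<Delta> / (real m * \<epsilon>\<^sup>2))
      = P * (real m + q) / H"
    unfolding P_def q_def using m H eps by (simp add: field_simps power2_eq_square)
  ultimately show ?thesis by (metis mult.assoc times_divide_eq_right)
qed

lemma rate_le_epsilon:
  fixes L \<Delta> \<epsilon> \<sigma> \<gamma> :: real and K S :: nat
  assumes K: "real K = 24 * L * \<Delta> / \<epsilon>" and K_pos: "K > 0" and eps: "\<epsilon> > 0" and S: "S \<ge> 1"
    and \<gamma>: "0 < \<gamma>" "1 / 2 \<le> \<gamma> * L" "\<gamma> * L * \<sigma>\<^sup>2 \<le> \<epsilon> * real S / 2"
  shows "2 * (\<Delta> + real K * (L * \<gamma>\<^sup>2 * \<sigma>\<^sup>2 / (2 * real S))) / (\<gamma> * real K) \<le> \<epsilon>"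
proof -
  have "2 * \<Delta> / (\<gamma> * real K) = \<epsilon> / (12 * (\<gamma> * L))"
    using K K_pos eps \<gamma>(1) by (auto simp: field_simps)
  also have "\<dots> \<le> \<epsilon> / 6" by (rule divide_left_mono) (use \<gamma>(2) eps in \<open>auto simp: mult_ac\<close>)
  finally have "2 * \<Delta> / (\<gamma> * real K) \<le> \<epsilon> / 6" .
  moreover have "2 * (real K * (L * \<gamma>\<^sup>2 * \<sigma>\<^sup>2 / (2 * real S))) / (\<gamma> * real K)
      = \<gamma> * L * \<sigma>\<^sup>2 / real S"
    using K_pos \<gamma>(1) S by (simp add: field_simps power2_eq_square)
  moreover have "\<gamma> * L * \<sigma>\<^sup>2 / real S \<le> \<epsilon> / 2" using \<gamma>(3) S by (simp add: divide_simps)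
  ultimately show ?thesis using eps by (simp add: add_divide_distrib)
qed

section \<open>The schedule and its timing\<close>

lemma sum_fun_upd_member:
  fixes f :: "'a \<Rightarrow> 'b::comm_monoid_add"
  assumes "finite A" "i \<in> A"
  shows "sum (f(i := y)) A + f i = sum f A + y"
proof -
  have "sum (f(i := y)) (A - {i}) = sum f (A - {i})" by (rule sum.cong) auto
  then show ?thesis using assms by (simp add: sum.remove add_ac)
qed

lemma next_worker_min:
  assumes "n \<ge> (1::nat)"
  shows "next_worker n fin \<in> {1..n} \<and> (\<forall>j\<in>{1..n}. fin (next_worker n fin) \<le> fin j)"
proof -
  have fin: "finite (fin ` {1..n})" and ne: "fin ` {1..n} \<noteq> {}" using assms by auto
  obtain i0 where i0: "i0 \<in> {1..n}" "fin i0 = Min (fin ` {1..n})"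
    using Min_in[OF fin ne] by auto
  have "1 \<le> i0 \<and> i0 \<le> n \<and> (\<forall>j. 1 \<le> j \<and> j \<le> n \<longrightarrow> fin i0 \<le> fin j)"
    using i0 fin by auto
  then have "1 \<le> next_worker n fin \<and> next_worker n fin \<le> n \<and>
      (\<forall>j. 1 \<le> j \<and> j \<le> n \<longrightarrow> fin (next_worker n fin) \<le> fin j)"
    unfolding next_worker_def by (rule LeastI)
  then show ?thesis by auto
qed

locale rennala_schedule =
  fixes n :: nat and \<tau> :: "nat \<Rightarrow> real" and S :: nat and \<gamma> :: real
    and G :: "'a::real_vector \<Rightarrow> 'b \<Rightarrow> 'a" and x0 :: 'a
  assumes n_pos: "n \<ge> 1"
    and tau_pos: "\<And>i. 1 \<le> i \<Longrightarrow> i \<le> n \<Longrightarrow> 0 < \<tau> i"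
    and tau_sorted: "\<And>i j. 1 \<le> i \<Longrightarrow> i \<le> j \<Longrightarrow> j \<le> n \<Longrightarrow> \<tau> i \<le> \<tau> j"
    and S_pos: "S \<ge> 1"
begin

abbreviation run where "run \<omega> m \<equiv> rennala_run n \<tau> S \<gamma> G x0 \<omega> m"
abbreviation step where "step \<xi> s \<equiv> rennala_step n \<tau> S \<gamma> G \<xi> s"
abbreviation arrival where "arrival s \<equiv> next_worker n (wfin s)"

definition accepted_count :: "'a rstate \<Rightarrow> nat" where
  "accepted_count s = (if wlab s (arrival s) = iter s then Suc (cnt s) else cnt s)"

lemma arrival_in: "arrival s \<in> {1..n}"
  and arrival_min: "j \<in> {1..n} \<Longrightarrow> wfin s (arrival s) \<le> wfin s j"
  using next_worker_min[OF n_pos, of "wfin s"] by auto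

lemma step_simps:
  "now (step \<xi> s) = wfin s (arrival s)"
  "iter (step \<xi> s) = (if accepted_count s = S then Suc (iter s) else iter s)"
  "cnt (step \<xi> s) = (if accepted_count s = S then 0 else accepted_count s)"
  "wlab (step \<xi> s) = (wlab s)(arrival s := iter s)"
  "wfin (step \<xi> s) = (wfin s)(arrival s := wfin s (arrival s) + \<tau> (arrival s))"
  "wpt (step \<xi> s) = (wpt s)(arrival s := pt s)"
  "acc (step \<xi> s) = (if accepted_count s = S then 0 else
      (if wlab s (arrival s) = iter s then acc s + (1 / real S) *\<^sub>R G (wpt s (arrival s)) \<xi>
       else acc s))"
  "pt (step \<xi> s) = (if accepted_count s = S then pt s - \<gamma> *\<^sub>R
      (if wlab s (arrival s) = iter s then acc s + (1 / real S) *\<^sub>R G (wpt s (arrival s)) \<xi>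
       else acc s) else pt s)"
  by (simp_all add: rennala_step_def Let_def accepted_count_def)

lemma schedule_indep_samples:
  "now (run \<omega> m) = now (run \<omega>' m) \<and> iter (run \<omega> m) = iter (run \<omega>' m) \<and>
   cnt (run \<omega> m) = cnt (run \<omega>' m) \<and> wlab (run \<omega> m) = wlab (run \<omega>' m) \<and>
   wfin (run \<omega> m) = wfin (run \<omega>' m)"
  by (induction m) (simp_all add: rennala_init_def step_simps accepted_count_def)

lemma iter_Suc_cases:
  "iter (run \<omega> (Suc m)) = iter (run \<omega> m) \<or> iter (run \<omega> (Suc m)) = Suc (iter (run \<omega> m))"
  by (simp add: step_simps)

lemma iter_mono: "m \<le> m' \<Longrightarrow> iter (run \<omega> m) \<le> iter (run \<omega> m')"
proof (induction m' rule: dec_induct)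
  case (step k) then show ?case using iter_Suc_cases[of \<omega> k] by auto
qed simp

definition schedule_inv :: "'a rstate \<Rightarrow> bool" where
  "schedule_inv s \<longleftrightarrow> (\<forall>j\<in>{1..n}. now s \<le> wfin s j \<and> wfin s j \<le> now s + \<tau> j) \<and> cnt s < S
     \<and> (\<forall>w. wlab s w \<le> iter s)"

lemma schedule_inv_run: "schedule_inv (run \<omega> m)"
proof (induction m)
  case 0 then show ?case using tau_pos S_pos by (auto simp: schedule_inv_def rennala_init_def less_imp_le)
next
  case (Suc m)
  define s where "s = run \<omega> m"
  have inv: "schedule_inv s" using Suc s_def by simp
  have i: "arrival s \<in> {1..n}" by (rule arrival_in)
  have c: "accepted_count s \<le> S" using inv unfolding schedule_inv_def accepted_count_def by auto
  show ?case unfolding s_def[symmetric] rennala_run.simps schedule_inv_def step_simps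
  proof (intro conjI ballI allI)
    fix j assume j: "j \<in> {1..n}"
    show "wfin s (arrival s) \<le> ((wfin s)(arrival s := wfin s (arrival s) + \<tau> (arrival s))) j"
      using arrival_min[OF j] tau_pos[of "arrival s"] i by auto
    have "now s \<le> wfin s (arrival s)" "wfin s j \<le> now s + \<tau> j"
      using inv i j unfolding schedule_inv_def by auto
    then show "((wfin s)(arrival s := wfin s (arrival s) + \<tau> (arrival s))) j \<le> wfin s (arrival s) + \<tau> j"
      by auto
  next
    show "(if accepted_count s = S then 0 else accepted_count s) < S" using c S_pos by auto
  next
    fix w
    show "((wlab s)(arrival s := iter s)) w \<le> (if accepted_count s = S then Suc (iter s) else iter s)"
      using inv unfolding schedule_inv_def by (auto simp: le_SucI)
  qed
qed

text \<open>At time \<open>T\<close> an iteration is under way and worker \<open>i\<close> has delivered \<open>a i\<close> gradients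
  accepted in it since \<open>T\<close>. Besides these, worker \<open>i\<close> needs at most the computation it was
  running at time \<open>T\<close> and, if its current computation is for the current iteration, that one.\<close>
definition iteration_progress :: "real \<Rightarrow> 'a rstate \<Rightarrow> bool" where
  "iteration_progress T s \<longleftrightarrow> (\<exists>a::nat\<Rightarrow>nat. (\<Sum>i\<in>{1..n}. a i) \<le> cnt s \<and>
     (\<forall>i\<in>{1..n}. wfin s i \<le> T + \<tau> i * (real (a i) + (if wlab s i = iter s then 2 else 1))))"

lemma iteration_progress_now: "iteration_progress (now (run \<omega> m)) (run \<omega> m)"
  unfolding iteration_progress_def
proof (intro exI[of _ "\<lambda>_. 0"] conjI ballI)
  fix i assume i: "i \<in> {1..n}"
  then have "wfin (run \<omega> m) i \<le> now (run \<omega> m) + \<tau> i"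
    using schedule_inv_run[of \<omega> m] by (auto simp: schedule_inv_def)
  moreover have "\<tau> i \<le> \<tau> i * (real 0 + (if wlab (run \<omega> m) i = iter (run \<omega> m) then 2 else 1))"
    using tau_pos[of i] i by auto
  ultimately show "wfin (run \<omega> m) i \<le> now (run \<omega> m)
      + \<tau> i * (real 0 + (if wlab (run \<omega> m) i = iter (run \<omega> m) then 2 else 1))"
    by linarith
qed simp

lemma iteration_progress_step:
  assumes prog: "iteration_progress T s" and same: "iter (step \<xi> s) = iter s"
  shows "iteration_progress T (step \<xi> s)"
proof -
  obtain a where a_sum: "(\<Sum>i\<in>{1..n}. a i) \<le> cnt s"
    and a_fin: "\<And>i. i \<in> {1..n} \<Longrightarrow>
        wfin s i \<le> T + \<tau> i * (real (a i) + (if wlab s i = iter s then 2 else 1))"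
    using prog unfolding iteration_progress_def by auto
  define i where "i = arrival s"
  define a' where "a' = (if wlab s i = iter s then a(i := Suc (a i)) else a)"
  have i: "i \<in> {1..n}" unfolding i_def by (rule arrival_in)
  have not_full: "accepted_count s \<noteq> S" using same by (auto simp: step_simps split: if_splits)
  have "(\<Sum>j\<in>{1..n}. a' j) \<le> cnt (step \<xi> s)"
    using sum_fun_upd_member[of "{1..n}" i a "Suc (a i)"] i a_sum not_full
    by (auto simp: a'_def step_simps accepted_count_def i_def)
  moreover have "wfin (step \<xi> s) j \<le> T + \<tau> j *
      (real (a' j) + (if wlab (step \<xi> s) j = iter (step \<xi> s) then 2 else 1))" if j: "j \<in> {1..n}" for j
    using a_fin[OF j] same
    by (cases "j = i") (auto simp: step_simps i_def[symmetric] a'_def algebra_simps)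
  ultimately show ?thesis unfolding iteration_progress_def by blast
qed

definition speed :: "nat \<Rightarrow> real" where "speed m = (\<Sum>j=1..m. 1 / \<tau> j)"

lemma speed_pos: "m \<in> {1..n} \<Longrightarrow> speed m > 0"
  unfolding speed_def using tau_pos by (intro sum_pos) auto

text \<open>The next arrival is no later than the next completion of each of the workers \<open>1..m\<close>.\<close>
lemma iteration_progress_arrival_bound:
  assumes prog: "iteration_progress T s" and m: "m \<in> {1..n}"
  shows "(wfin s (arrival s) - T) * speed m \<le> real (cnt s) + 2 * real m"
proof -
  obtain a where a_sum: "(\<Sum>i\<in>{1..n}. a i) \<le> cnt s"
    and a_fin: "\<And>i. i \<in> {1..n} \<Longrightarrow>
        wfin s i \<le> T + \<tau> i * (real (a i) + (if wlab s i = iter s then 2 else 1))"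
    using prog unfolding iteration_progress_def by auto
  have each: "(wfin s (arrival s) - T) * (1 / \<tau> j) \<le> real (a j) + 2" if j: "j \<in> {1..m}" for j
  proof -
    have jn: "j \<in> {1..n}" using j m by auto
    have tp: "\<tau> j > 0" using tau_pos jn by auto
    have "wfin s (arrival s) \<le> T + \<tau> j * (real (a j) + 2)"
      using arrival_min[OF jn] a_fin[OF jn] tp by (smt (verit) mult_left_mono of_nat_0_le_iff)
    then show ?thesis using tp by (simp add: divide_simps mult.commute)
  qed
  have "(wfin s (arrival s) - T) * speed m = (\<Sum>j=1..m. (wfin s (arrival s) - T) * (1 / \<tau> j))"
    unfolding speed_def by (simp add: sum_distrib_left)
  also have "\<dots> \<le> (\<Sum>j=1..m. real (a j) + 2)" by (rule sum_mono) (rule each)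
  also have "\<dots> = real (\<Sum>j=1..m. a j) + 2 * real m" by (simp add: sum.distrib)
  also have "(\<Sum>j=1..m. a j) \<le> (\<Sum>j=1..n. a j)" using m by (intro sum_mono2) auto
  finally show ?thesis using a_sum by linarith
qed

lemma sum_wfin_step:
  "(\<Sum>j\<in>{1..n}. wfin (step \<xi> s) j) = (\<Sum>j\<in>{1..n}. wfin s j) + \<tau> (arrival s)"
  using sum_fun_upd_member[of "{1..n}" "arrival s" "wfin s" "wfin s (arrival s) + \<tau> (arrival s)"]
    arrival_in[of s]
  by (simp add: step_simps)

lemma iteration_progress_sum_wfin_le:
  assumes prog: "iteration_progress T (run \<omega> m)"
  shows "(\<Sum>j\<in>{1..n}. wfin (run \<omega> m) j) \<le> (\<Sum>j\<in>{1..n}. T + \<tau> j * (real S + 1))"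
proof (rule sum_mono)
  fix j assume j: "j \<in> {1..n}"
  obtain a where a_sum: "(\<Sum>i\<in>{1..n}. a i) \<le> cnt (run \<omega> m)"
    and a_fin: "\<And>i. i \<in> {1..n} \<Longrightarrow> wfin (run \<omega> m) i \<le>
        T + \<tau> i * (real (a i) + (if wlab (run \<omega> m) i = iter (run \<omega> m) then 2 else 1))"
    using prog unfolding iteration_progress_def by auto
  have "a j \<le> (\<Sum>i\<in>{1..n}. a i)" using j by (intro member_le_sum) auto
  moreover have "cnt (run \<omega> m) < S"
    using schedule_inv_run[of \<omega> m] by (simp add: schedule_inv_def)
  ultimately have "real (a j) + (if wlab (run \<omega> m) j = iter (run \<omega> m) then 2 else 1) \<le> real S + 1"
    using a_sum by auto
  then have "\<tau> j * (real (a j) + (if wlab (run \<omega> m) j = iter (run \<omega> m) then 2 else 1))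
      \<le> \<tau> j * (real S + 1)"
    using tau_pos[of j] j by (intro mult_left_mono) auto
  then show "wfin (run \<omega> m) j \<le> T + \<tau> j * (real S + 1)" using a_fin[OF j] by linarith
qed

lemma progress_within_iteration:
  assumes prog: "iteration_progress T (run \<omega> m)"
    and same: "\<forall>i\<le>j. iter (run \<omega> (m + i)) = iter (run \<omega> m)"
  shows "iteration_progress T (run \<omega> (m + j)) \<and>
    (\<Sum>i\<in>{1..n}. wfin (run \<omega> m) i) + real j * \<tau> 1 \<le> (\<Sum>i\<in>{1..n}. wfin (run \<omega> (m + j)) i)"
  using same
proof (induction j)
  case 0 then show ?case using prog by simp
next
  case (Suc j)
  then have IH: "iteration_progress T (run \<omega> (m + j))"
    "(\<Sum>i\<in>{1..n}. wfin (run \<omega> m) i) + real j * \<tau> 1 \<le> (\<Sum>i\<in>{1..n}. wfin (run \<omega> (m + j)) i)"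
    by auto
  have "iter (run \<omega> (Suc (m + j))) = iter (run \<omega> (m + j))"
    using Suc.prems by (metis add_Suc_right le_Suc_eq order_refl)
  then have "iteration_progress T (run \<omega> (m + Suc j))"
    using iteration_progress_step[OF IH(1)] by simp
  moreover have "\<tau> 1 \<le> \<tau> (arrival (run \<omega> (m + j)))"
    using arrival_in[of "run \<omega> (m + j)"] by (intro tau_sorted) auto
  ultimately show ?case using IH(2) sum_wfin_step[of "\<omega> (m + j)" "run \<omega> (m + j)"]
    by (simp add: algebra_simps)
qed

text \<open>Every arrival advances the total of the finishing times by at least \<open>\<tau> 1\<close>, while
  during an iteration this total stays bounded.\<close>
lemma iteration_ends:
  assumes prog: "iteration_progress T (run \<omega> m)"
  shows "\<exists>j. iter (run \<omega> (m + j)) \<noteq> iter (run \<omega> m)"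
proof (rule ccontr)
  assume "\<not> ?thesis"
  then have same: "\<forall>i\<le>j. iter (run \<omega> (m + i)) = iter (run \<omega> m)" for j by auto
  define C where "C = (\<Sum>j\<in>{1..n}. T + \<tau> j * (real S + 1)) - (\<Sum>i\<in>{1..n}. wfin (run \<omega> m) i)"
  obtain j :: nat where j: "C / \<tau> 1 < real j" using reals_Archimedean2 by blast
  have "real j * \<tau> 1 \<le> C"
    using progress_within_iteration[OF prog same[of j]]
      iteration_progress_sum_wfin_le[of T \<omega> "m + j"]
    unfolding C_def by linarith
  moreover have "\<tau> 1 > 0" using tau_pos n_pos by auto
  ultimately show False using j by (simp add: divide_simps)
qed

lemma next_iteration_within:
  assumes m0: "m0 \<in> {1..n}"
  shows "\<exists>m'. iter (run \<omega> m') = Suc (iter (run \<omega> m)) \<and>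
    now (run \<omega> m') \<le> now (run \<omega> m) + (real S - 1 + 2 * real m0) / speed m0"
proof -
  define T where "T = now (run \<omega> m)"
  define k where "k = iter (run \<omega> m)"
  have prog: "iteration_progress T (run \<omega> m)" unfolding T_def by (rule iteration_progress_now)
  define j0 where "j0 = (LEAST j. iter (run \<omega> (m + j)) \<noteq> k)"
  have j0: "iter (run \<omega> (m + j0)) \<noteq> k"
    unfolding j0_def k_def using iteration_ends[OF prog] by (rule LeastI_ex)
  have before: "\<And>j. j < j0 \<Longrightarrow> iter (run \<omega> (m + j)) = k"
    unfolding j0_def using not_less_Least by blast
  obtain j1 where j1: "j0 = Suc j1" using j0 k_def by (cases j0) auto
  define s where "s = run \<omega> (m + j1)"
  have "\<forall>i\<le>j1. iter (run \<omega> (m + i)) = iter (run \<omega> m)" using before j1 k_def by auto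
  then have prog_s: "iteration_progress T s" and iter_s: "iter s = k"
    using progress_within_iteration[OF prog] before[of j1] j1 by (auto simp: s_def)
  have "iter (run \<omega> (m + j0)) = Suc k"
    using iter_Suc_cases[of \<omega> "m + j1"] j0 iter_s j1 by (auto simp: s_def)
  moreover have "now (run \<omega> (m + j0)) = wfin s (arrival s)" by (simp add: j1 s_def step_simps)
  moreover have "(wfin s (arrival s) - T) * speed m0 \<le> real S - 1 + 2 * real m0"
    using iteration_progress_arrival_bound[OF prog_s m0] schedule_inv_run[of \<omega> "m + j1"]
    by (auto simp: s_def schedule_inv_def)
  then have "wfin s (arrival s) - T \<le> (real S - 1 + 2 * real m0) / speed m0"
    using speed_pos[OF m0] by (simp add: divide_simps)
  ultimately show ?thesis unfolding T_def k_def by auto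
qed

lemma iteration_reached_within:
  assumes m0: "m0 \<in> {1..n}"
  shows "\<exists>m. iter (run \<omega> m) = k \<and> now (run \<omega> m) \<le> real k * ((real S - 1 + 2 * real m0) / speed m0)"
proof (induction k)
  case 0
  show ?case by (rule exI[of _ 0]) (simp add: rennala_init_def)
next
  case (Suc k)
  define \<delta> where "\<delta> = (real S - 1 + 2 * real m0) / speed m0"
  obtain m where m: "iter (run \<omega> m) = k" "now (run \<omega> m) \<le> real k * \<delta>"
    using Suc unfolding \<delta>_def by blast
  obtain m' where "iter (run \<omega> m') = Suc k" "now (run \<omega> m') \<le> now (run \<omega> m) + \<delta>"
    using next_iteration_within[OF m0, of \<omega> m] m(1) unfolding \<delta>_def by blast
  with m(2) show ?case unfolding \<delta>_def[symmetric] by (intro exI[of _ m']) (simp add: algebra_simps)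
qed

lemma run_time_bound:
  fixes L \<Delta> \<epsilon> \<sigma> :: real
  assumes K: "real K = 24 * L * \<Delta> / \<epsilon>" and S: "real S - 1 \<le> \<sigma>\<^sup>2 / \<epsilon>"
    and Lpos: "L > 0" and \<Delta>: "\<Delta> \<ge> 0" and eps: "\<epsilon> > 0"
  shows "\<exists>m. iter (run \<omega> m) = K \<and> now (run \<omega> m) \<le>
    96 * Min ((\<lambda>m. inverse ((1 / real m) * (\<Sum>i=1..m. 1 / \<tau> i)) *
               (L * \<Delta> / \<epsilon> + \<sigma>\<^sup>2 * L * \<Delta> / (real m * \<epsilon>\<^sup>2))) ` {1..n})"
proof -
  define h where "h = (\<lambda>m. inverse ((1 / real m) * (\<Sum>i=1..m. 1 / \<tau> i)) *
      (L * \<Delta> / \<epsilon> + \<sigma>\<^sup>2 * L * \<Delta> / (real m * \<epsilon>\<^sup>2)))"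
  obtain m0 where m0: "m0 \<in> {1..n}" "h m0 = Min (h ` {1..n})"
    using Min_in[of "h ` {1..n}"] n_pos by fastforce
  obtain m where "iter (run \<omega> m) = K"
    and "now (run \<omega> m) \<le> real K * ((real S - 1 + 2 * real m0) / speed m0)"
    using iteration_reached_within[OF m0(1)] by blast
  moreover have "real K * ((real S - 1 + 2 * real m0) / speed m0) \<le> 96 * h m0"
    using iteration_budget_le[OF K S Lpos \<Delta> eps speed_pos[OF m0(1)]] m0(1)
    by (simp add: h_def speed_def)
  ultimately show ?thesis unfolding h_def[symmetric] using m0(2) by auto
qed

section \<open>Iterates as functions of the samples\<close>

text \<open>The schedule (arrival times, labels, counters) is the same for all sample sequences, so it
  can be read off the run with arbitrary samples.\<close>
definition skeleton :: "nat \<Rightarrow> 'a rstate" where "skeleton j = run (\<lambda>_. undefined) j"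

definition accepted :: "nat \<Rightarrow> nat set" where
  "accepted k = {j. iter (skeleton j) = k \<and> wlab (skeleton j) (arrival (skeleton j)) = iter (skeleton j)}"

definition accepted_before :: "nat \<Rightarrow> nat set" where
  "accepted_before k = (\<Union>l<k. accepted l)"

text \<open>The \<open>j\<close>-th arrival uses sample \<open>\<omega> j\<close>, and all gradients accepted in iteration \<open>k\<close>
  are computed at \<open>x\<^sup>k\<close>.\<close>
primrec server_point :: "nat \<Rightarrow> (nat \<Rightarrow> 'b) \<Rightarrow> 'a" where
  "server_point 0 \<omega> = x0"
| "server_point (Suc k) \<omega> =
     server_point k \<omega> - \<gamma> *\<^sub>R (\<Sum>j\<in>accepted k. (1 / real S) *\<^sub>R G (server_point k \<omega>) (\<omega> j))"

lemma skeleton_eq: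
  "iter (run \<omega> j) = iter (skeleton j)" "wlab (run \<omega> j) = wlab (skeleton j)"
  "wfin (run \<omega> j) = wfin (skeleton j)"
  unfolding skeleton_def using schedule_indep_samples[of \<omega> j "\<lambda>_. undefined"] by auto

lemma accepted_iff:
  "j \<in> accepted k \<longleftrightarrow> iter (run \<omega> j) = k \<and> wlab (run \<omega> j) (arrival (run \<omega> j)) = iter (run \<omega> j)"
  by (simp add: accepted_def skeleton_eq)

lemma accepted_before_later_iteration:
  assumes "i \<in> accepted k" "k < iter (run \<omega> j)" shows "i < j"
  using assms iter_mono[of j i \<omega>] by (force simp: accepted_iff[of _ _ \<omega>])

lemma accepted_after_earlier_iteration:
  assumes "i \<in> accepted k" "iter (run \<omega> j) < k" shows "j < i"
  using assms iter_mono[of i j \<omega>] by (force simp: accepted_iff[of _ _ \<omega>])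

lemma accepted_lessThan_Suc:
  assumes "iter (run \<omega> j) = k"
  shows "{i\<in>accepted k. i < Suc j} = (if wlab (run \<omega> j) (arrival (run \<omega> j)) = k
             then insert j {i\<in>accepted k. i < j} else {i\<in>accepted k. i < j})"
proof -
  have "j \<in> accepted k \<longleftrightarrow> wlab (run \<omega> j) (arrival (run \<omega> j)) = k"
    using assms accepted_iff[of j k \<omega>] by auto
  then show ?thesis by (auto simp: less_Suc_eq)
qed

definition server_inv :: "(nat \<Rightarrow> 'b) \<Rightarrow> nat \<Rightarrow> bool" where
  "server_inv \<omega> j \<longleftrightarrow>
     (\<forall>w. wlab (run \<omega> j) w = iter (run \<omega> j) \<longrightarrow> wpt (run \<omega> j) w = pt (run \<omega> j))
     \<and> acc (run \<omega> j) =
         (\<Sum>i\<in>{i\<in>accepted (iter (run \<omega> j)). i < j}. (1 / real S) *\<^sub>R G (pt (run \<omega> j)) (\<omega> i))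
     \<and> pt (run \<omega> j) = server_point (iter (run \<omega> j)) \<omega>
     \<and> cnt (run \<omega> j) = card {i\<in>accepted (iter (run \<omega> j)). i < j}"

lemma server_inv_run: "server_inv \<omega> j"
proof (induction j)
  case 0 then show ?case by (simp add: server_inv_def rennala_init_def accepted_def)
next
  case (Suc j)
  define s where "s = run \<omega> j"
  define k where "k = iter s"
  have inv: "\<forall>w. wlab s w = k \<longrightarrow> wpt s w = pt s"
      "acc s = (\<Sum>i\<in>{i\<in>accepted k. i < j}. (1 / real S) *\<^sub>R G (pt s) (\<omega> i))"
      "pt s = server_point k \<omega>" "cnt s = card {i\<in>accepted k. i < j}"
    using Suc unfolding server_inv_def s_def k_def by auto
  have upto_Suc: "{i\<in>accepted k. i < Suc j} = (if wlab s (arrival s) = k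
      then insert j {i\<in>accepted k. i < j} else {i\<in>accepted k. i < j})"
    using accepted_lessThan_Suc[of \<omega> j k] by (simp add: s_def k_def)
  have count: "accepted_count s = card {i\<in>accepted k. i < Suc j}"
    using inv(4) by (cases "wlab s (arrival s) = k") (simp_all add: upto_Suc accepted_count_def k_def[symmetric])
  have acc1: "(if wlab s (arrival s) = iter s
        then acc s + (1 / real S) *\<^sub>R G (wpt s (arrival s)) (\<omega> j) else acc s)
      = (\<Sum>i\<in>{i\<in>accepted k. i < Suc j}. (1 / real S) *\<^sub>R G (pt s) (\<omega> i))"
    using inv(1,2) by (cases "wlab s (arrival s) = k") (simp_all add: upto_Suc k_def[symmetric] add.commute)
  have run_Suc: "run \<omega> (Suc j) = step (\<omega> j) s" by (simp add: s_def)
  show ?case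
  proof (cases "accepted_count s = S")
    case False
    then show ?thesis unfolding server_inv_def run_Suc step_simps using inv acc1 count
      by (auto simp: k_def)
  next
    case True
    have iter_Suc: "iter (run \<omega> (Suc j)) = Suc k"
      unfolding run_Suc using True by (simp add: step_simps k_def)
    have none_yet: "{i\<in>accepted (Suc k). i < Suc j} = {}"
      using accepted_after_earlier_iteration[of _ "Suc k" \<omega> j] by (force simp: s_def[symmetric] k_def less_Suc_eq_le)
    have all: "{i\<in>accepted k. i < Suc j} = accepted k"
      using accepted_before_later_iteration[of _ k \<omega> "Suc j"] iter_Suc by auto
    have "\<forall>w. wlab (step (\<omega> j) s) w \<noteq> Suc k"
      using schedule_inv_run[of \<omega> j] by (simp add: step_simps s_def[symmetric] k_def schedule_inv_def)
        (metis Suc_n_not_le_n)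
    moreover have "pt (step (\<omega> j) s) = server_point (Suc k) \<omega>"
      using True acc1 all inv(3) by (simp add: step_simps k_def[symmetric])
    ultimately show ?thesis
      using True unfolding server_inv_def run_Suc iter_Suc[unfolded run_Suc]
      by (simp add: none_yet step_simps)
  qed
qed

lemma iteration_reached: "\<exists>m. iter (run \<omega> m) = k"
  using iteration_reached_within[of 1 \<omega> k] n_pos by auto

lemma rennala_iterate_eq_server_point: "rennala_iterate n \<tau> S \<gamma> G x0 \<omega> k = server_point k \<omega>"
proof -
  define m where "m = (LEAST m. iter (run \<omega> m) = k)"
  have "iter (run \<omega> m) = k" unfolding m_def using iteration_reached by (rule LeastI_ex)
  moreover have "pt (run \<omega> m) = server_point (iter (run \<omega> m)) \<omega>"
    using server_inv_run[of \<omega> m] unfolding server_inv_def by blast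
  ultimately show ?thesis unfolding rennala_iterate_def m_def by simp
qed

text \<open>Iteration \<open>k\<close> ends at the arrival that brings its counter to \<open>S\<close>.\<close>
lemma card_accepted: "finite (accepted k) \<and> card (accepted k) = S"
proof -
  define \<omega> :: "nat \<Rightarrow> 'b" where "\<omega> = (\<lambda>_. undefined)"
  define m where "m = (LEAST m. iter (run \<omega> m) = Suc k)"
  have m: "iter (run \<omega> m) = Suc k" unfolding m_def using iteration_reached by (rule LeastI_ex)
  then obtain j where j: "m = Suc j" by (cases m) (auto simp: rennala_init_def)
  have "iter (run \<omega> j) \<noteq> Suc k" using not_less_Least[of j "\<lambda>m. iter (run \<omega> m) = Suc k"] j m_def by auto
  then have iter_j: "iter (run \<omega> j) = k" using iter_Suc_cases[of \<omega> j] m j by auto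
  define s where "s = run \<omega> j"
  have full: "accepted_count s = S" using m j iter_j by (simp add: s_def step_simps split: if_splits)
  have sub: "accepted k \<subseteq> {..<Suc j}"
    using accepted_before_later_iteration[of _ k \<omega> "Suc j"] m j by auto
  have upto_Suc: "{i\<in>accepted k. i < Suc j} = (if wlab s (arrival s) = k
      then insert j {i\<in>accepted k. i < j} else {i\<in>accepted k. i < j})"
    using accepted_lessThan_Suc[of \<omega> j k] iter_j by (simp add: s_def)
  have "cnt s = card {i\<in>accepted k. i < j}"
    using server_inv_run[of \<omega> j] iter_j by (simp add: server_inv_def s_def)
  then have "accepted_count s = card {i\<in>accepted k. i < Suc j}"
    using iter_j by (simp add: upto_Suc accepted_count_def s_def)
  moreover have "{i\<in>accepted k. i < Suc j} = accepted k" using sub by auto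
  moreover have "finite (accepted k)" using sub by (rule finite_subset) simp
  ultimately show ?thesis using full by simp
qed

lemma finite_accepted_before: "finite (accepted_before k)"
  unfolding accepted_before_def using card_accepted by blast

lemma accepted_before_Suc: "accepted_before (Suc k) = accepted_before k \<union> accepted k"
  unfolding accepted_before_def by (auto simp: lessThan_Suc)

lemma accepted_before_disjoint: "accepted_before k \<inter> accepted k = {}"
  unfolding accepted_before_def accepted_def by auto

lemma server_point_cong:
  "(\<And>j. j \<in> accepted_before k \<Longrightarrow> \<omega> j = \<omega>' j) \<Longrightarrow> server_point k \<omega> = server_point k \<omega>'"
proof (induction k)
  case (Suc k)
  then have "server_point k \<omega> = server_point k \<omega>'" and "\<And>j. j \<in> accepted k \<Longrightarrow> \<omega> j = \<omega>' j"
    by (auto simp: accepted_before_Suc)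
  then show ?case by simp
qed simp

end

section \<open>Expected descent\<close>

locale rennala_sgd = rennala_schedule n \<tau> S \<gamma> G x0
  for n \<tau> S \<gamma> and G :: "'a::euclidean_space \<Rightarrow> 'b \<Rightarrow> 'a" and x0 +
  fixes f :: "'a \<Rightarrow> real" and gradf :: "'a \<Rightarrow> 'a" and D :: "'b measure" and L \<sigma> fstar :: real
  assumes grad: "\<And>x. (f has_derivative (\<lambda>h. gradf x \<bullet> h)) (at x)"
    and Lpos: "L > 0"
    and smooth: "\<And>x y. norm (gradf x - gradf y) \<le> L * norm (x - y)"
    and lower: "\<And>x. fstar \<le> f x"
    and D_prob: "prob_space D"
    and G_meas: "(\<lambda>(x, \<xi>). G x \<xi>) \<in> borel_measurable (borel \<Otimes>\<^sub>M D)"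
    and unbiased_int: "\<And>x. integrable D (\<lambda>\<xi>. G x \<xi>)"
    and unbiased: "\<And>x. (\<integral>\<xi>. G x \<xi> \<partial>D) = gradf x"
    and var_int: "\<And>x. integrable D (\<lambda>\<xi>. (norm (G x \<xi> - gradf x))\<^sup>2)"
    and var: "\<And>x. (\<integral>\<xi>. (norm (G x \<xi> - gradf x))\<^sup>2 \<partial>D) \<le> \<sigma>\<^sup>2"
    and gam: "0 < \<gamma>" "\<gamma> * L \<le> 1"
begin

abbreviation samples where "samples \<equiv> PiM (UNIV :: nat set) (\<lambda>_. D)"

lemma prob_space_samples: "prob_space (PiM (I :: nat set) (\<lambda>_. D))"
  by (rule prob_space_PiM_iid[OF D_prob])

lemma f_measurable[measurable]: "f \<in> borel_measurable borel"
proof -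
  have "continuous_on UNIV f"
    by (rule continuous_at_imp_continuous_on) (use has_derivative_continuous[OF grad] in auto)
  then show ?thesis by (rule borel_measurable_continuous_onI)
qed

lemma gradf_measurable[measurable]: "gradf \<in> borel_measurable borel"
proof -
  have "L-lipschitz_on UNIV gradf"
    by (rule lipschitz_onI) (use smooth Lpos in \<open>auto simp: dist_norm\<close>)
  then have "continuous_on UNIV gradf" by (rule lipschitz_on_continuous_on)
  then show ?thesis by (rule borel_measurable_continuous_onI)
qed

lemma server_point_measurable:
  "accepted_before k \<subseteq> I \<Longrightarrow> server_point k \<in> borel_measurable (PiM I (\<lambda>_. D))"
proof (induction k)
  case (Suc k)
  then have IH: "server_point k \<in> borel_measurable (PiM I (\<lambda>_. D))"
    and acc_I: "accepted k \<subseteq> I"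
    by (auto simp: accepted_before_Suc)
  have "(\<lambda>\<omega>. G (server_point k \<omega>) (\<omega> j)) \<in> borel_measurable (PiM I (\<lambda>_. D))"
    if j: "j \<in> accepted k" for j
  proof -
    have "(\<lambda>\<omega>. (server_point k \<omega>, \<omega> j)) \<in> measurable (PiM I (\<lambda>_. D)) (borel \<Otimes>\<^sub>M D)"
      using IH measurable_component_singleton[of j I "\<lambda>_. D"] j acc_I by auto
    from measurable_compose[OF this G_meas] show ?thesis by simp
  qed
  then show ?case using IH by simp
next
  case 0
  have "server_point 0 = (\<lambda>_. x0)" by (rule ext) simp
  then show ?case by simp
qed

abbreviation past_and_fresh :: "nat \<Rightarrow> (nat \<Rightarrow> 'b) \<Rightarrow> (nat \<Rightarrow> 'b) \<Rightarrow> nat \<Rightarrow> 'b" where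
  "past_and_fresh k u z \<equiv> merge (accepted_before k) (accepted k) (u, z)"

definition noise :: real where "noise = L * \<gamma>\<^sup>2 * \<sigma>\<^sup>2 / (2 * real S)"

lemma expected_step_given_past:
  "(\<integral>\<^sup>+z. ennreal (f (server_point (Suc k) (past_and_fresh k u z)) - fstar)
       + ennreal (\<gamma> / 2 * (norm (gradf (server_point k (past_and_fresh k u z))))\<^sup>2)
     \<partial>PiM (accepted k) (\<lambda>_. D))
   \<le> ennreal (f (server_point k u) - fstar) + ennreal noise"
proof -
  define x where "x = server_point k u"
  have past: "server_point k (past_and_fresh k u z) = x" for z
    unfolding x_def by (rule server_point_cong) (auto simp: merge_def)
  have fresh: "past_and_fresh k u z j = z j" if "j \<in> accepted k" for z j
    using that accepted_before_disjoint[of k] by (auto simp: merge_def)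
  define h where "h z = ennreal (f (x - \<gamma> *\<^sub>R (\<Sum>j\<in>accepted k. (1 / real S) *\<^sub>R G x (z j))) - fstar)"
    for z
  have h_eq: "ennreal (f (server_point (Suc k) (past_and_fresh k u z)) - fstar) = h z" for z
    by (simp add: past fresh h_def)
  have Gx: "(\<lambda>\<xi>. G x \<xi>) \<in> borel_measurable D" using unbiased_int[of x] by auto
  have "(\<lambda>z. G x (z j)) \<in> borel_measurable (PiM (accepted k) (\<lambda>_. D))" if "j \<in> accepted k" for j
    using measurable_compose[OF measurable_component_singleton[OF that, of "\<lambda>_. D"] Gx] by simp
  then have "h \<in> borel_measurable (PiM (accepted k) (\<lambda>_. D))" unfolding h_def by measurable
  then have "(\<integral>\<^sup>+z. h z + ennreal (\<gamma> / 2 * (norm (gradf x))\<^sup>2) \<partial>PiM (accepted k) (\<lambda>_. D))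
      = (\<integral>\<^sup>+z. h z \<partial>PiM (accepted k) (\<lambda>_. D)) + ennreal (\<gamma> / 2 * (norm (gradf x))\<^sup>2)"
    using prob_space.emeasure_space_1[OF prob_space_samples] by (subst nn_integral_add) auto
  also have "\<dots> \<le> ennreal (f x - fstar) + ennreal noise"
    unfolding h_def noise_def
    by (rule expected_sgd_step_descent[OF grad smooth lower D_prob unbiased_int unbiased var_int var
          conjunct1[OF card_accepted] conjunct2[OF card_accepted] S_pos gam Lpos])
  finally show ?thesis by (simp only: h_eq past x_def[symmetric])
qed

definition expected_gap :: "nat \<Rightarrow> ennreal" where
  "expected_gap k = (\<integral>\<^sup>+\<omega>. ennreal (f (server_point k \<omega>) - fstar) \<partial>samples)"

definition expected_sq_grad :: "nat \<Rightarrow> ennreal" where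
  "expected_sq_grad k = (\<integral>\<^sup>+\<omega>. ennreal ((norm (gradf (server_point k \<omega>)))\<^sup>2) \<partial>samples)"

lemma expected_gap_restrict:
  assumes "accepted_before k \<subseteq> B" "finite B"
  shows "expected_gap k = (\<integral>\<^sup>+\<omega>. ennreal (f (server_point k \<omega>) - fstar) \<partial>PiM B (\<lambda>_. D))"
  unfolding expected_gap_def
proof (rule nn_integral_PiM_UNIV_restrict[OF D_prob assms(2)])
  show "(\<lambda>\<omega>. ennreal (f (server_point k \<omega>) - fstar)) \<in> borel_measurable (PiM B (\<lambda>_. D))"
    using server_point_measurable[OF assms(1)] by measurable
  show "ennreal (f (server_point k (restrict \<omega> B)) - fstar) = ennreal (f (server_point k \<omega>) - fstar)"
    for \<omega> using assms(1) by (subst server_point_cong[of k _ \<omega>]) auto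
qed

lemma scaled_expected_sq_grad:
  assumes "c \<ge> 0"
  shows "ennreal c * expected_sq_grad k = (\<integral>\<^sup>+\<omega>. ennreal (c * (norm (gradf (server_point k \<omega>)))\<^sup>2) \<partial>samples)"
proof -
  have [measurable]: "server_point k \<in> borel_measurable samples" by (rule server_point_measurable) simp
  have "ennreal c * expected_sq_grad k
      = (\<integral>\<^sup>+\<omega>. ennreal c * ennreal ((norm (gradf (server_point k \<omega>)))\<^sup>2) \<partial>samples)"
    unfolding expected_sq_grad_def by (rule nn_integral_cmult[symmetric]) measurable
  then show ?thesis using assms by (simp add: ennreal_mult)
qed

text \<open>Fubini over the samples accepted before iteration \<open>k\<close> and those accepted in it.\<close>
lemma expected_gap_step:
  "expected_gap (Suc k) + ennreal (\<gamma> / 2) * expected_sq_grad k \<le> expected_gap k + ennreal noise"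
proof -
  define Bk where "Bk = accepted_before k"
  define Ak where "Ak = accepted k"
  have disj: "Bk \<inter> Ak = {}" by (simp add: Bk_def Ak_def accepted_before_disjoint)
  have fin: "finite Bk" "finite Ak" using finite_accepted_before card_accepted by (auto simp: Bk_def Ak_def)
  have sub: "accepted_before (Suc k) \<subseteq> Bk \<union> Ak" "accepted_before k \<subseteq> Bk \<union> Ak"
    by (auto simp: Bk_def Ak_def accepted_before_Suc)
  define F where "F \<omega> = ennreal (f (server_point (Suc k) \<omega>) - fstar)
      + ennreal (\<gamma> / 2 * (norm (gradf (server_point k \<omega>)))\<^sup>2)" for \<omega>
  have F_meas: "F \<in> borel_measurable (PiM I (\<lambda>_. D))" if "Bk \<union> Ak \<subseteq> I" for I
  proof -
    have [measurable]: "server_point k \<in> borel_measurable (PiM I (\<lambda>_. D))"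
      "server_point (Suc k) \<in> borel_measurable (PiM I (\<lambda>_. D))"
      using sub that by (auto intro!: server_point_measurable)
    show ?thesis unfolding F_def by measurable
  qed
  have [measurable]: "server_point k \<in> borel_measurable samples" "server_point (Suc k) \<in> borel_measurable samples"
    by (auto intro!: server_point_measurable)
  have "expected_gap (Suc k) + ennreal (\<gamma> / 2) * expected_sq_grad k = (\<integral>\<^sup>+\<omega>. F \<omega> \<partial>samples)"
    unfolding expected_gap_def scaled_expected_sq_grad[of "\<gamma> / 2", OF less_imp_le[OF half_gt_zero[OF gam(1)]]] F_def
    by (rule nn_integral_add[symmetric]) measurable
  also have "\<dots> = (\<integral>\<^sup>+z. F z \<partial>PiM (Bk \<union> Ak) (\<lambda>_. D))"
  proof (rule nn_integral_PiM_UNIV_restrict[OF D_prob _ F_meas])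
    fix \<omega> show "F (restrict \<omega> (Bk \<union> Ak)) = F \<omega>"
      unfolding F_def using sub by (subst (1 2) server_point_cong[of _ _ \<omega>]) auto
  qed (use fin in auto)
  also have "\<dots> = (\<integral>\<^sup>+u. (\<integral>\<^sup>+z. F (merge Bk Ak (u, z)) \<partial>PiM Ak (\<lambda>_. D)) \<partial>PiM Bk (\<lambda>_. D))"
  proof -
    interpret P: product_prob_space "\<lambda>_. D" "UNIV :: nat set" by (rule product_prob_space_iid[OF D_prob])
    show ?thesis by (rule P.product_nn_integral_fold[OF disj fin F_meas]) simp
  qed
  also have "\<dots> \<le> (\<integral>\<^sup>+u. ennreal (f (server_point k u) - fstar) + ennreal noise \<partial>PiM Bk (\<lambda>_. D))"
    by (rule nn_integral_mono) (use expected_step_given_past in \<open>simp add: F_def Bk_def Ak_def\<close>)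
  also have "\<dots> = expected_gap k + ennreal noise"
    using expected_gap_restrict[of k Bk] server_point_measurable[of k Bk] fin
      prob_space.emeasure_space_1[OF prob_space_samples]
    by (subst nn_integral_add) (auto simp: Bk_def)
  finally show ?thesis .
qed

lemma expected_gap_telescope:
  "expected_gap K + ennreal (\<gamma> / 2) * (\<Sum>k<K. expected_sq_grad k) \<le> expected_gap 0 + of_nat K * ennreal noise"
proof (induction K)
  case (Suc K)
  let ?c = "ennreal (\<gamma> / 2)" and ?\<Sigma> = "\<Sum>k<K. expected_sq_grad k"
  have "expected_gap (Suc K) + ?c * (\<Sum>k<Suc K. expected_sq_grad k)
      = (expected_gap (Suc K) + ?c * expected_sq_grad K) + ?c * ?\<Sigma>"
    by (simp add: distrib_left add_ac)
  also have "\<dots> \<le> (expected_gap K + ennreal noise) + ?c * ?\<Sigma>"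
    by (rule add_right_mono[OF expected_gap_step])
  also have "\<dots> = (expected_gap K + ?c * ?\<Sigma>) + ennreal noise"
    by (simp add: add_ac)
  also have "\<dots> \<le> (expected_gap 0 + of_nat K * ennreal noise) + ennreal noise"
    by (rule add_right_mono[OF Suc.IH])
  also have "\<dots> = expected_gap 0 + of_nat (Suc K) * ennreal noise"
    by (simp add: distrib_right add_ac)
  finally show ?case .
qed simp

lemma sum_expected_sq_grad_le:
  "ennreal (\<gamma> / 2) * (\<Sum>k<K. expected_sq_grad k) \<le> ennreal (f x0 - fstar + real K * noise)"
proof -
  have "expected_gap 0 = ennreal (f x0 - fstar) * emeasure samples (space samples)"
    by (simp add: expected_gap_def)
  then have "expected_gap 0 = ennreal (f x0 - fstar)"
    by (simp only: prob_space.emeasure_space_1[OF prob_space_samples] mult_1_right)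
  moreover have "noise \<ge> 0" unfolding noise_def using Lpos by simp
  ultimately have gap0: "expected_gap 0 + of_nat K * ennreal noise = ennreal (f x0 - fstar + real K * noise)"
    using lower[of x0] by (simp add: ennreal_of_nat_eq_real_of_nat ennreal_mult ennreal_plus)
  have "ennreal (\<gamma> / 2) * (\<Sum>k<K. expected_sq_grad k)
      \<le> expected_gap K + ennreal (\<gamma> / 2) * (\<Sum>k<K. expected_sq_grad k)"
    by (rule add_increasing) auto
  also have "\<dots> \<le> expected_gap 0 + of_nat K * ennreal noise" by (rule expected_gap_telescope)
  finally show ?thesis unfolding gap0 .
qed

lemma average_expected_sq_grad_le:
  assumes K: "real K = 24 * L * (f x0 - fstar) / \<epsilon>" and eps: "\<epsilon> > 0"
    and \<gamma>: "1 / 2 \<le> \<gamma> * L" "\<gamma> * L * \<sigma>\<^sup>2 \<le> \<epsilon> * real S / 2"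
  shows "ennreal (1 / real K) * (\<Sum>k<K. \<integral>\<^sup>+\<omega>.
      ennreal ((norm (gradf (rennala_iterate n \<tau> S \<gamma> G x0 \<omega> k)))\<^sup>2) \<partial>samples) \<le> ennreal \<epsilon>"
  unfolding rennala_iterate_eq_server_point expected_sq_grad_def[symmetric]
proof (rule ennreal_average_le[OF sum_expected_sq_grad_le])
  have noise: "noise \<ge> 0" unfolding noise_def using Lpos by simp
  then show "0 \<le> f x0 - fstar + real K * noise" using lower[of x0] by simp
  show "0 < \<gamma> / 2" using gam(1) by simp
  assume "0 < K"
  then show "(f x0 - fstar + real K * noise) / (\<gamma> / 2 * real K) \<le> \<epsilon>"
    using rate_le_epsilon[OF K _ eps S_pos gam(1) \<gamma>] gam(1) by (simp add: noise_def field_simps)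
qed

end

theorem mainTheorem3:
  fixes f :: "'a::euclidean_space \<Rightarrow> real"
    and gradf :: "'a \<Rightarrow> 'a"
    and D :: "'b measure"
    and G :: "'a \<Rightarrow> 'b \<Rightarrow> 'a"
    and L \<sigma> \<epsilon> fstar \<Delta> \<gamma> :: real
    and x0 :: 'a
    and n S K :: nat
    and \<tau> :: "nat \<Rightarrow> real"
  assumes grad: "\<And>x. (f has_derivative (\<lambda>h. gradf x \<bullet> h)) (at x)"
    and Lpos: "L > 0"
    and smooth: "\<And>x y. norm (gradf x - gradf y) \<le> L * norm (x - y)"
    and lower: "\<And>x. fstar \<le> f x"
    and Delta: "\<Delta> = f x0 - fstar"
    and D_prob: "prob_space D"
    and G_meas: "(\<lambda>(x, \<xi>). G x \<xi>) \<in> borel_measurable (borel \<Otimes>\<^sub>M D)"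
    and unbiased_int: "\<And>x. integrable D (\<lambda>\<xi>. G x \<xi>)"
    and unbiased: "\<And>x. (\<integral>\<xi>. G x \<xi> \<partial>D) = gradf x"
    and var_int: "\<And>x. integrable D (\<lambda>\<xi>. (norm (G x \<xi> - gradf x))\<^sup>2)"
    and var: "\<And>x. (\<integral>\<xi>. (norm (G x \<xi> - gradf x))\<^sup>2 \<partial>D) \<le> \<sigma>\<^sup>2"
    and eps: "\<epsilon> > 0"
    and n_pos: "n \<ge> 1"
    and tau_pos: "\<And>i. 1 \<le> i \<Longrightarrow> i \<le> n \<Longrightarrow> 0 < \<tau> i"
    and tau_sorted: "\<And>i j. 1 \<le> i \<Longrightarrow> i \<le> j \<Longrightarrow> j \<le> n \<Longrightarrow> \<tau> i \<le> \<tau> j"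
    and S_def: "S = nat (max \<lceil>\<sigma>\<^sup>2 / \<epsilon>\<rceil> 1)"
    and gamma_def: "\<gamma> = (if \<sigma>\<^sup>2 = 0 then 1 / L
                        else min (1 / L) (\<epsilon> * real S / (2 * L * \<sigma>\<^sup>2)))"
    and K_def: "real K = 24 * L * \<Delta> / \<epsilon>"
  shows "(\<forall>\<omega>. \<exists>m. iter (rennala_run n \<tau> S \<gamma> G x0 \<omega> m) = K \<and>
              now (rennala_run n \<tau> S \<gamma> G x0 \<omega> m) \<le>
                96 * Min ((\<lambda>m. inverse ((1 / real m) * (\<Sum>i=1..m. 1 / \<tau> i)) *
                         (L * \<Delta> / \<epsilon> + \<sigma>\<^sup>2 * L * \<Delta> / (real m * \<epsilon>\<^sup>2))) ` {1..n}))
         \<and> ennreal (1 / real K) *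
             (\<Sum>k<K. \<integral>\<^sup>+ \<omega>. ennreal ((norm (gradf (rennala_iterate n \<tau> S \<gamma> G x0 \<omega> k)))\<^sup>2)
                        \<partial>(PiM UNIV (\<lambda>_::nat. D)))
           \<le> ennreal \<epsilon>"
proof -
  have S: "S \<ge> 1" "\<sigma>\<^sup>2 / \<epsilon> \<le> real S" "real S - 1 \<le> \<sigma>\<^sup>2 / \<epsilon>"
    using batch_size_bounds[OF eps S_def] by auto
  have \<gamma>: "0 < \<gamma>" "\<gamma> * L \<le> 1" "1 / 2 \<le> \<gamma> * L" "\<gamma> * L * \<sigma>\<^sup>2 \<le> \<epsilon> * real S / 2"
    using stepsize_bounds[OF Lpos eps S(2) gamma_def] by auto
  have \<Delta>: "\<Delta> \<ge> 0" using Delta lower[of x0] by simp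
  interpret R: rennala_sgd n \<tau> S \<gamma> G x0 f gradf D L \<sigma> fstar
    by (intro rennala_sgd.intro rennala_schedule.intro rennala_sgd_axioms.intro)
      (fact n_pos tau_pos tau_sorted S(1) grad Lpos smooth lower D_prob G_meas
        unbiased_int unbiased var_int var \<gamma>(1) \<gamma>(2))+
  show ?thesis
    using R.run_time_bound[OF K_def S(3) Lpos \<Delta> eps]
      R.average_expected_sq_grad_le[OF K_def[unfolded Delta] eps \<gamma>(3,4)]
    by blast
qed

end
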